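(* Let $t\geq 4$ be an even integer, let $a,b,c\geq 1$ and $w\geq 0$ be integers, and let $L=\{1^a,2^b,t^c\}$. If there exists a $t^{4w}$-extendable linear realization $rL$ of $L$, then for every $x=0,\dots,w$ there exists a linear realization $rL'$ of $L'=\{1^a,2^b,t^{c+4x+4}\}$. Furthermore, if $rL$ is special of type $2$, then $rL'$ can be taken special of type $2$ as well.
   Context: $\{1^a,2^b,t^c\}$ is the multiset with $a$ copies of $1$, $b$ copies of $2$, $c$ copies of $t$. For a multiset $L$ of positive integers with $|L|=v-1$, each at most $v-1$, a linear realization of $L$ is a Hamiltonian path $[x_0,\dots,x_{v-1}]$ of the complete graph on $\{0,\dots,v-1\}$ such that the multiset $\{|x_i-x_{i+1}|\}$ equals $L$. It is special of type $2$ if its endpoints are $0$ and $1$. For $L=\{1^a,2^b,t^c\}$ set $v=|L|+1$, $e_1=[v-t,v-t+2]$, $e_2=[v-t,v-t+1]$; for an edge $e=[p,q]$ and an integer $m$, $e+m$ denotes $[p+m,q+m]$. A linear realization $rL$ is $t^{4w}$-extendable if there is $i\in\{1,2\}$ such that for every $x=0,\dots,w$ both $e_i+4x$ and $e_i+4x+i$ are edges of $rL$. *)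

theory Defs
  imports Main "HOL-Library.Multiset"
begin

definition L3 :: "nat \<Rightarrow> nat \<Rightarrow> nat \<Rightarrow> nat \<Rightarrow> nat multiset" where
  "L3 a b t c = replicate_mset a 1 + replicate_mset b 2 + replicate_mset c t"

text \<open>A Hamiltonian path [x_0,...,x_{v-1}] of K_v on {0,...,v-1}, as a list.\<close>
definition edge_lengths :: "nat list \<Rightarrow> nat multiset" where
  "edge_lengths xs = mset (map (\<lambda>i. nat \<bar>int (xs ! i) - int (xs ! Suc i)\<bar>) [0..<length xs - 1])"

definition linear_realization :: "nat multiset \<Rightarrow> nat list \<Rightarrow> bool" where
  "linear_realization L xs \<longleftrightarrow>
     length xs = size L + 1 \<and> distinct xs \<and> set xs = {0..<length xs} \<and>
     edge_lengths xs = L"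

definition special2 :: "nat list \<Rightarrow> bool" where
  "special2 xs \<longleftrightarrow> {hd xs, last xs} = {0, 1}"

text \<open>[p,q] is an edge of the path xs (unordered; vertices as integers so that
  out-of-range translates are simply not edges).\<close>
definition is_edge :: "nat list \<Rightarrow> int \<Rightarrow> int \<Rightarrow> bool" where
  "is_edge xs p q \<longleftrightarrow> (\<exists>i. Suc i < length xs \<and> {int (xs ! i), int (xs ! Suc i)} = {p, q})"

text \<open>e_1 = [v-t, v-t+2], e_2 = [v-t, v-t+1]: e_i = [v-t, v-t+(3-i)].\<close>
definition extendable :: "nat \<Rightarrow> nat \<Rightarrow> nat list \<Rightarrow> bool" where
  "extendable t w xs \<longleftrightarrow>
     (let v = int (length xs) in
      \<exists>i\<in>{1::int, 2}. \<forall>x\<in>{0..w}.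
        is_edge xs (v - int t + 4 * int x) (v - int t + (3 - i) + 4 * int x) \<and>
        is_edge xs (v - int t + 4 * int x + i) (v - int t + (3 - i) + 4 * int x + i))"

end

theory Submission
  imports Defs
begin

text \<open>Write \<open>v\<close> for the number of vertices and \<open>u = v - t\<close>. If \<open>[u, u + d]\<close> is an edge
  of a linear realization, replacing it by the detour \<open>u, u + t, u + d + t, u + d\<close> adds the
  new vertices \<open>v, v + d\<close> and two edges of length \<open>t\<close>, without changing the endpoints.
  With \<open>{d, k} = {1, 2}\<close>, doing this for the edges \<open>[u, u + d]\<close> and \<open>[u + k, u + k + d]\<close>
  adds exactly the vertices \<open>v, \<dots>, v + 3\<close> and four edges of length \<open>t\<close>. All other edges
  survive, in particular the translates by \<open>4\<close> of the two edges used, and these are the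
  corresponding edges for the new value \<open>v + 4\<close>; so the construction can be iterated
  \<open>x + 1\<close> times along a \<open>t\<^sup>4\<^sup>w\<close>-extendable realization.\<close>

lemma edge_lengths_Cons_Cons:
  "edge_lengths (x # y # zs) = {#nat \<bar>int x - int y\<bar>#} + edge_lengths (y # zs)"
proof -
  have "[0..<length (x # y # zs) - 1] = 0 # map Suc [0..<length zs]"
    by (simp add: upt_conv_Cons map_Suc_upt del: upt_Suc)
  moreover have "[0..<length (y # zs) - 1] = [0..<length zs]" by simp
  ultimately show ?thesis unfolding edge_lengths_def by (simp add: comp_def)
qed

lemma edge_lengths_append:
  "xs \<noteq> [] \<Longrightarrow> ys \<noteq> [] \<Longrightarrow>
    edge_lengths (xs @ ys) = edge_lengths xs + edge_lengths ys + {#nat \<bar>int (last xs) - int (hd ys)\<bar>#}"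
proof (induction xs rule: induct_list012)
  case (2 x)
  then show ?case
    by (cases ys) (simp_all add: edge_lengths_Cons_Cons, simp add: edge_lengths_def)
next
  case (3 x y zs)
  then show ?case by (simp add: edge_lengths_Cons_Cons)
qed simp

definition detour :: "nat \<Rightarrow> nat list \<Rightarrow> nat \<Rightarrow> nat list" where
  "detour t xs i = take (Suc i) xs @ [xs ! i + t, xs ! Suc i + t] @ drop (Suc i) xs"

lemma length_detour: "length (detour t xs i) = length xs + 2"
  unfolding detour_def by simp

lemma nth_detour:
  assumes "Suc i < length xs"
  shows "detour t xs i ! k =
    (if k \<le> i then xs ! k else if k = Suc i then xs ! i + t
     else if k = i + 2 then xs ! Suc i + t else xs ! (k - 2))"
proof -
  have "\<not> k \<le> i + 2 \<Longrightarrow> Suc (k - 3) = k - 2" by arith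
  then show ?thesis using assms unfolding detour_def by (auto simp: nth_append min_def)
qed

lemma set_detour:
  assumes "Suc i < length xs"
  shows "set (detour t xs i) = set xs \<union> {xs ! i + t, xs ! Suc i + t}"
proof -
  have "set xs = set (take (Suc i) xs) \<union> set (drop (Suc i) xs)"
    by (metis append_take_drop_id set_append)
  then show ?thesis using assms unfolding detour_def by auto
qed

lemma distinct_detour:
  assumes "Suc i < length xs" "distinct xs" "xs ! i + t \<notin> set xs" "xs ! Suc i + t \<notin> set xs"
  shows "distinct (detour t xs i)"
proof -
  have "xs ! i \<noteq> xs ! Suc i" using assms(1,2) by (simp add: nth_eq_iff_index_eq)
  moreover have "distinct (take (Suc i) xs @ drop (Suc i) xs)" using assms(2) by simp
  moreover have "set xs = set (take (Suc i) xs) \<union> set (drop (Suc i) xs)"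
    by (metis append_take_drop_id set_append)
  ultimately show ?thesis unfolding detour_def using assms(3,4)
    by (auto simp del: append_take_drop_id simp add: distinct_append)
qed

lemma hd_detour: "Suc i < length xs \<Longrightarrow> hd (detour t xs i) = hd xs"
  unfolding detour_def by (cases xs) auto

lemma last_detour: "Suc i < length xs \<Longrightarrow> last (detour t xs i) = last xs"
  unfolding detour_def by simp

lemma edge_lengths_detour:
  assumes "Suc i < length xs"
  shows "edge_lengths (detour t xs i) = edge_lengths xs + {#t, t#}"
proof -
  let ?A = "take (Suc i) xs" and ?B = "drop (Suc i) xs"
  have A: "?A \<noteq> []" "last ?A = xs ! i" using assms by (auto simp: take_Suc_conv_app_nth)
  have B: "?B \<noteq> []" "hd ?B = xs ! Suc i" using assms by (auto simp: hd_drop_conv_nth)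
  have "edge_lengths xs = edge_lengths (?A @ ?B)" by simp
  also have "\<dots> = edge_lengths ?A + edge_lengths ?B + {#nat \<bar>int (xs ! i) - int (xs ! Suc i)\<bar>#}"
    using edge_lengths_append[OF A(1) B(1)] A(2) B(2) by (simp del: append_take_drop_id)
  finally have old: "edge_lengths xs = \<dots>" .
  have "edge_lengths (detour t xs i) =
      edge_lengths ?A + edge_lengths ([xs ! i + t, xs ! Suc i + t] @ ?B) + {#t#}"
    unfolding detour_def using A B by (subst edge_lengths_append) auto
  also have "edge_lengths ([xs ! i + t, xs ! Suc i + t] @ ?B) =
      {#nat \<bar>int (xs ! i) - int (xs ! Suc i)\<bar>#} + edge_lengths ?B + {#t#}"
    using B by (subst edge_lengths_append) (auto simp: edge_lengths_Cons_Cons edge_lengths_def)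
  finally show ?thesis using old by simp
qed

lemma is_edge_detour:
  assumes "Suc i < length xs" "is_edge xs p q" "{int (xs ! i), int (xs ! Suc i)} \<noteq> {p, q}"
  shows "is_edge (detour t xs i) p q"
proof -
  obtain j where j: "Suc j < length xs" "{int (xs ! j), int (xs ! Suc j)} = {p, q}"
    using assms(2) unfolding is_edge_def by blast
  with assms(3) consider "j < i" | "i < j" by fastforce
  then show ?thesis
  proof cases
    case 1
    then show ?thesis unfolding is_edge_def using j assms(1)
      by (intro exI[of _ j]) (auto simp: nth_detour length_detour)
  next
    case 2
    then show ?thesis unfolding is_edge_def using j assms(1)
      by (intro exI[of _ "j + 2"]) (auto simp: nth_detour length_detour)
  qed
qed

lemma double_detour:
  assumes lr: "linear_realization L xs" and dk: "{d, k} = {1, 2::nat}"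
    and u: "u = int (length xs) - int t"
    and e1: "is_edge xs u (u + int d)" and e2: "is_edge xs (u + int k) (u + int k + int d)"
  shows "\<exists>xs'. linear_realization (L + {#t, t, t, t#}) xs' \<and> length xs' = length xs + 4 \<and>
     hd xs' = hd xs \<and> last xs' = last xs \<and>
     (\<forall>p q. is_edge xs p q \<and> u + 4 \<le> p \<and> u + 4 \<le> q \<longrightarrow> is_edge xs' p q)"
proof -
  define n where "n = length xs"
  have dk': "d = 1 \<and> k = 2 \<or> d = 2 \<and> k = 1" using dk by (auto simp: doubleton_eq_iff)
  have len: "n = size L + 1" and dist: "distinct xs" and st: "set xs = {0..<n}"
    and el: "edge_lengths xs = L"
    using lr unfolding linear_realization_def n_def by auto
  obtain i where i: "Suc i < n" "{int (xs ! i), int (xs ! Suc i)} = {u, u + int d}"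
    using e1 unfolding is_edge_def n_def by blast
  have new1: "{xs ! i + t, xs ! Suc i + t} = {n, n + d}"
    using i(2) unfolding u n_def by (auto simp: doubleton_eq_iff)
  define xs1 where "xs1 = detour t xs i"
  have len1: "length xs1 = n + 2" unfolding xs1_def n_def by (simp add: length_detour)
  have st1: "set xs1 = {0..<n} \<union> {n, n + d}"
    using i st new1 unfolding xs1_def n_def by (simp add: set_detour)
  have dist1: "distinct xs1" unfolding xs1_def
    using i new1 st dist by (intro distinct_detour) (auto simp: n_def doubleton_eq_iff)
  have keep1: "is_edge xs1 p q" if "is_edge xs p q" "{u, u + int d} \<noteq> {p, q}" for p q
    unfolding xs1_def using i that by (intro is_edge_detour) (auto simp: n_def)
  have "is_edge xs1 (u + int k) (u + int k + int d)"
    using keep1 e2 dk' by (auto simp: doubleton_eq_iff)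
  then obtain j where j: "Suc j < n + 2"
    "{int (xs1 ! j), int (xs1 ! Suc j)} = {u + int k, u + int k + int d}"
    using len1 unfolding is_edge_def by auto
  have new2: "{xs1 ! j + t, xs1 ! Suc j + t} = {n + k, n + k + d}"
    using j(2) unfolding u n_def by (auto simp: doubleton_eq_iff)
  define xs2 where "xs2 = detour t xs1 j"
  have "set xs2 = {0..<n + 4}"
    using j st1 new2 len1 dk' unfolding xs2_def by (auto simp: set_detour)
  moreover have "distinct xs2" unfolding xs2_def
    using j new2 st1 dist1 len1 dk' by (intro distinct_detour) (auto simp: doubleton_eq_iff)
  moreover have "edge_lengths xs2 = L + {#t, t, t, t#}"
    using i j el len1 unfolding xs1_def xs2_def n_def by (simp add: edge_lengths_detour)
  moreover have "length xs2 = n + 4" using len1 unfolding xs2_def by (simp add: length_detour)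
  moreover have "hd xs2 = hd xs" "last xs2 = last xs"
    using i j len1 unfolding xs1_def xs2_def n_def by (auto simp: hd_detour last_detour)
  moreover have "is_edge xs2 p q" if "is_edge xs p q" "u + 4 \<le> p" "u + 4 \<le> q" for p q
  proof -
    have "is_edge xs1 p q" using keep1 that by (auto simp: doubleton_eq_iff)
    then show ?thesis unfolding xs2_def using j that len1 dk'
      by (intro is_edge_detour) (auto simp: doubleton_eq_iff)
  qed
  ultimately show ?thesis using len unfolding linear_realization_def n_def
    by (intro exI[of _ xs2]) auto
qed

definition edge_ladder :: "nat list \<Rightarrow> nat \<Rightarrow> nat \<Rightarrow> int \<Rightarrow> nat \<Rightarrow> bool" where
  "edge_ladder xs d k u x \<longleftrightarrow>
     (\<forall>y\<le>x. is_edge xs (u + 4 * int y) (u + 4 * int y + int d) \<and>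
             is_edge xs (u + 4 * int y + int k) (u + 4 * int y + int k + int d))"

lemma edge_ladder_Suc_shift:
  assumes ladder: "edge_ladder xs d k u (Suc x)"
    and keep: "\<And>p q. is_edge xs p q \<Longrightarrow> u + 4 \<le> p \<Longrightarrow> u + 4 \<le> q \<Longrightarrow> is_edge xs' p q"
  shows "edge_ladder xs' d k (u + 4) x"
  unfolding edge_ladder_def
proof (intro allI impI)
  fix y assume "y \<le> x"
  have shift: "u + 4 * int (Suc y) = u + 4 + 4 * int y" by simp
  have "is_edge xs (u + 4 * int (Suc y)) (u + 4 * int (Suc y) + int d) \<and>
      is_edge xs (u + 4 * int (Suc y) + int k) (u + 4 * int (Suc y) + int k + int d)"
    using ladder \<open>y \<le> x\<close> Suc_le_mono unfolding edge_ladder_def by blast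
  then show "is_edge xs' (u + 4 + 4 * int y) (u + 4 + 4 * int y + int d) \<and>
      is_edge xs' (u + 4 + 4 * int y + int k) (u + 4 + 4 * int y + int k + int d)"
    unfolding shift by (auto intro: keep)
qed

lemma edge_ladder_extension:
  assumes "linear_realization L xs" "{d, k} = {1, 2::nat}"
    and "edge_ladder xs d k (int (length xs) - int t) x"
  shows "\<exists>xs'. linear_realization (L + replicate_mset (4 * x + 4) t) xs' \<and>
    hd xs' = hd xs \<and> last xs' = last xs"
  using assms(1,3)
proof (induction x arbitrary: L xs)
  case 0
  then show ?case
    using double_detour[OF "0.prems"(1) assms(2) refl, of t]
    unfolding edge_ladder_def by (auto simp: numeral_eq_Suc)
next
  case (Suc x)
  have "edge_ladder xs d k (int (length xs) - int t) 0"
    using Suc.prems(2) unfolding edge_ladder_def by auto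
  then obtain xs1 where xs1: "linear_realization (L + {#t, t, t, t#}) xs1"
    "length xs1 = length xs + 4" "hd xs1 = hd xs" "last xs1 = last xs"
    "\<And>p q. is_edge xs p q \<Longrightarrow> int (length xs) - int t + 4 \<le> p \<Longrightarrow>
       int (length xs) - int t + 4 \<le> q \<Longrightarrow> is_edge xs1 p q"
    using double_detour[OF Suc.prems(1) assms(2) refl, of t]
    unfolding edge_ladder_def by auto
  have "edge_ladder xs1 d k (int (length xs1) - int t) x"
    using edge_ladder_Suc_shift[OF Suc.prems(2) xs1(5)] xs1(2) by (simp add: algebra_simps)
  from Suc.IH[OF xs1(1) this] xs1(3,4) show ?case by (auto simp: numeral_eq_Suc)
qed

theorem lemma3p6:
  fixes t a b c w :: nat and rL :: "nat list"
  assumes "even t" and "t \<ge> 4" and "a \<ge> 1" and "b \<ge> 1" and "c \<ge> 1"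
    and "linear_realization (L3 a b t c) rL"
    and "extendable t w rL"
  shows "\<forall>x\<in>{0..w}. \<exists>rL'. linear_realization (L3 a b t (c + 4 * x + 4)) rL' \<and>
           (special2 rL \<longrightarrow> special2 rL')"
proof
  fix x assume x: "x \<in> {0..w}"
  obtain i where i: "i \<in> {1::int, 2}" and E: "\<forall>y\<in>{0..w}.
      is_edge rL (int (length rL) - int t + 4 * int y) (int (length rL) - int t + (3 - i) + 4 * int y) \<and>
      is_edge rL (int (length rL) - int t + 4 * int y + i) (int (length rL) - int t + (3 - i) + 4 * int y + i)"
    using assms(7) unfolding extendable_def Let_def by blast
  have dk: "{nat (3 - i), nat i} = {1, 2::nat}" using i by auto
  have "edge_ladder rL (nat (3 - i)) (nat i) (int (length rL) - int t) x"
    unfolding edge_ladder_def using E x i by (auto simp: algebra_simps)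
  from edge_ladder_extension[OF assms(6) dk this] obtain rL' where
    "linear_realization (L3 a b t c + replicate_mset (4 * x + 4) t) rL'"
    "hd rL' = hd rL" "last rL' = last rL"
    by blast
  moreover have "L3 a b t c + replicate_mset (4 * x + 4) t = L3 a b t (c + 4 * x + 4)"
    unfolding L3_def by (simp add: multiset_eq_iff)
  ultimately show "\<exists>rL'. linear_realization (L3 a b t (c + 4 * x + 4)) rL' \<and> (special2 rL \<longrightarrow> special2 rL')"
    unfolding special2_def by metis
qed

end
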